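(* Let $1<p<\infty$, $0<\alpha<\frac np$, $0<q<p-1$, and let $\nu,\sigma$ be nonnegative locally finite Radon measures on $\mathbb{R}^n$. Then there is a constant $C>0$ depending only on $p,q,\alpha,n$ such that $$\mathbf{W}[(\mathbf{W}\nu)^q\,d\sigma](x)\le C\,(\mathbf{W}\nu(x))^{\frac q{p-1}}\Big[\mathbf{W}\sigma(x)+(\mathbf{K}\sigma(x))^{\frac{p-1-q}{p-1}}\Big],\qquad x\in\mathbb{R}^n.$$
   Context: $\mathbf{W}\nu(x)=\mathbf{W}_{\alpha,p}\nu(x)=\int_0^\infty\big[\nu(B(x,t))/t^{n-\alpha p}\big]^{\frac1{p-1}}\frac{dt}{t}$, with $B(x,t)$ the ball of radius $t$ centered at $x$. For a Borel set $E$, $\kappa(E)$ is the least constant such that $\|\mathbf{W}\nu\|_{L^q(d\sigma_E)}\le\kappa(E)\,\nu(\mathbb{R}^n)^{\frac1{p-1}}$ for all nonnegative Radon measures $\nu$, where $\sigma_E$ is the restriction of $\sigma$ to $E$. The intrinsic potential is $\mathbf{K}\sigma(x)=\mathbf{K}_{\alpha,p,q}\sigma(x)=\int_0^\infty\Big[\frac{\kappa(B(x,t))^{\frac{q(p-1)}{p-1-q}}}{t^{n-\alpha p}}\Big]^{\frac1{p-1}}\frac{dt}{t}$. *)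

theory Defs
  imports "HOL-Analysis.Analysis"
begin

text \<open>Real powers of extended nonnegative reals (only used with positive exponents):
  \<open>\<infinity>\<close> to a positive power is \<open>\<infinity>\<close>.\<close>
definition epow :: "ennreal \<Rightarrow> real \<Rightarrow> ennreal" where
  "epow x r = (if x = \<infinity> then (if r > 0 then \<infinity> else if r = 0 then 1 else 0)
               else ennreal (enn2real x powr r))"

text \<open>Nonnegative locally finite Borel (= Radon on R^n) measures.\<close>
definition locfin_measure :: "'a::euclidean_space measure \<Rightarrow> bool" where
  "locfin_measure M \<longleftrightarrow> sets M = sets borel \<and> (\<forall>K. compact K \<longrightarrow> emeasure M K < \<infinity>)"

definition wolff :: "real \<Rightarrow> real \<Rightarrow> 'a::euclidean_space measure \<Rightarrow> 'a \<Rightarrow> ennreal" where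
  "wolff \<alpha> p \<mu> x = (\<integral>\<^sup>+ t\<in>{0<..}.
      epow (emeasure \<mu> (ball x t) / ennreal (t powr (real DIM('a) - \<alpha> * p))) (1 / (p - 1))
      * ennreal (1 / t) \<partial>lborel)"

definition Lq_on :: "real \<Rightarrow> 'a measure \<Rightarrow> 'a set \<Rightarrow> ('a \<Rightarrow> ennreal) \<Rightarrow> ennreal" where
  "Lq_on q \<sigma> E f = epow (\<integral>\<^sup>+ y\<in>E. epow (f y) q \<partial>\<sigma>) (1 / q)"

definition kappa :: "real \<Rightarrow> real \<Rightarrow> real \<Rightarrow> 'a::euclidean_space measure \<Rightarrow> 'a set \<Rightarrow> ennreal" where
  "kappa \<alpha> p q \<sigma> E = Inf {C. \<forall>\<nu>::'a measure. locfin_measure \<nu> \<longrightarrow>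
       Lq_on q \<sigma> E (wolff \<alpha> p \<nu>) \<le> C * epow (emeasure \<nu> UNIV) (1 / (p - 1))}"

definition intrinsic_pot :: "real \<Rightarrow> real \<Rightarrow> real \<Rightarrow> 'a::euclidean_space measure \<Rightarrow> 'a \<Rightarrow> ennreal" where
  "intrinsic_pot \<alpha> p q \<sigma> x = (\<integral>\<^sup>+ t\<in>{0<..}.
      epow (epow (kappa \<alpha> p q \<sigma> (ball x t)) (q * (p - 1) / (p - 1 - q))
             / ennreal (t powr (real DIM('a) - \<alpha> * p))) (1 / (p - 1))
      * ennreal (1 / t) \<partial>lborel)"

end

(* For y in B(x,t), the Wolff potential of nu at y sees only nu restricted to B(x,2t) at
   scales r < t, while for r >= t the ball B(y,r) lies in B(x,2r); hence
     W nu(y) <= W(nu restricted to B(x,2t))(y) + 2^((n - alpha p)/(p-1)) W nu(x).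
   Raising this to the power q and integrating over B(x,t) against sigma, the definition of
   kappa gives
     ((W nu)^q sigma)(B(x,t)) <~ kappa(B(x,t))^q nu(B(x,2t))^(q/(p-1)) + (W nu(x))^q sigma(B(x,t)).
   Inserted into the Wolff potential at x, the second term yields (W nu(x))^(q/(p-1)) W sigma(x);
   Hoelder's inequality with exponents (p-1)/q and (p-1)/(p-1-q) bounds the first one by
   (W nu(x))^(q/(p-1)) (K sigma(x))^((p-1-q)/(p-1)), because integrating nu(B(x,2t)) in place
   of nu(B(x,t)) only rescales W nu(x) by a constant. *)

theory Submission
  imports Defs
begin

lemma epow_0 [simp]: "r > 0 \<Longrightarrow> epow 0 r = 0"
  by (simp add: epow_def)

lemma epow_top [simp]: "r > 0 \<Longrightarrow> epow top r = top"
  by (simp add: epow_def)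

lemma epow_ennreal: "c \<ge> 0 \<Longrightarrow> epow (ennreal c) r = ennreal (c powr r)"
  by (simp add: epow_def)

lemma epow_eq_0_iff: "r > 0 \<Longrightarrow> epow a r = 0 \<longleftrightarrow> a = 0"
  by (cases a) (auto simp: epow_def)

lemma epow_mono: "r > 0 \<Longrightarrow> a \<le> b \<Longrightarrow> epow a r \<le> epow b r"
  by (cases a; cases b) (auto simp: epow_ennreal powr_mono2 top_unique ennreal_leI)

lemma epow_mult: "r > 0 \<Longrightarrow> epow (a * b) r = epow a r * epow b r"
  by (cases a; cases b)
    (auto simp: epow_ennreal powr_mult ennreal_mult_top ennreal_top_mult epow_eq_0_iff
      simp flip: ennreal_mult')

lemma epow_1 [simp]: "epow a 1 = a"
  by (cases a) (auto simp: epow_def)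

lemma epow_epow: "r > 0 \<Longrightarrow> s > 0 \<Longrightarrow> epow (epow a r) s = epow a (r * s)"
  by (cases a) (auto simp: epow_def powr_powr)

lemma epow_add_le:
  assumes "r > 0"
  shows "epow (a + b) r \<le> ennreal (2 powr r) * (epow a r + epow b r)"
proof -
  have "epow (a + b) r \<le> epow (2 * max a b) r"
    by (intro epow_mono assms) (metis add_mono max.cobounded1 max.cobounded2 mult_2)
  also have "\<dots> = ennreal (2 powr r) * epow (max a b) r"
    using assms by (simp add: epow_mult epow_ennreal[of 2, simplified])
  also have "epow (max a b) r \<le> epow a r + epow b r"
    using assms by (cases "a \<le> b") (auto simp: max_def add_increasing add_increasing2)
  finally show ?thesis
    by (simp add: mult_left_mono)
qed

lemma epow_divide_ennreal:
  assumes "r > 0" "c > 0"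
  shows "epow (a / ennreal c) r = epow a r * ennreal (c powr (- r))"
proof -
  have "a / ennreal c = a * ennreal (1 / c)"
    using assms by (simp add: divide_ennreal_def ennreal_inverse_positive flip: divide_ennreal)
  then show ?thesis
    using assms by (simp add: epow_mult epow_ennreal powr_minus_divide powr_divide)
qed

lemma borel_measurable_epow [measurable]:
  assumes [measurable]: "f \<in> borel_measurable M"
  shows "(\<lambda>x. epow (f x) r) \<in> borel_measurable M"
  unfolding epow_def by measurable

lemma ennreal_Youngs_inequality:
  assumes "0 < \<theta>" "\<theta> < 1"
  shows "epow a \<theta> * epow b (1 - \<theta>) \<le> ennreal \<theta> * a + ennreal (1 - \<theta>) * b"
proof (cases "a = 0 \<or> b = 0 \<or> a = top \<or> b = top")
  case True
  then show ?thesis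
    using assms by (auto simp: ennreal_mult_top)
next
  case False
  then obtain x y where "a = ennreal x" "b = ennreal y" "x > 0" "y > 0"
    by (cases a; cases b) auto
  moreover have "x powr \<theta> * y powr (1 - \<theta>) \<le> \<theta> * x + (1 - \<theta>) * y"
    using Youngs_inequality_0[of \<theta> "1 - \<theta>" x y] assms calculation by auto
  ultimately show ?thesis
    using assms by (simp add: epow_ennreal ennreal_leI del: ennreal_plus
      flip: ennreal_mult' ennreal_plus)
qed

lemma ennreal_Youngs_inequality_scaled:
  fixes U V :: ennreal
  assumes \<theta>: "0 < \<theta>" "\<theta> < 1" and UV: "U \<noteq> 0" "U \<noteq> top" "V \<noteq> 0" "V \<noteq> top"
  shows "epow a \<theta> * epow b (1 - \<theta>)
    \<le> epow U \<theta> * epow V (1 - \<theta>) * (ennreal \<theta> * (a / U) + ennreal (1 - \<theta>) * (b / V))"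
proof -
  have "U * (a / U) = a" "V * (b / V) = b"
    using UV by (simp_all add: ennreal_times_divide mult.commute[of U a] mult.commute[of V b]
      mult_divide_eq_ennreal)
  then have "epow a \<theta> * epow b (1 - \<theta>) = epow (U * (a / U)) \<theta> * epow (V * (b / V)) (1 - \<theta>)"
    by simp
  also have "\<dots> = epow U \<theta> * epow V (1 - \<theta>) * (epow (a / U) \<theta> * epow (b / V) (1 - \<theta>))"
    using \<theta> by (simp add: epow_mult mult_ac)
  also have "\<dots> \<le> epow U \<theta> * epow V (1 - \<theta>) * (ennreal \<theta> * (a / U) + ennreal (1 - \<theta>) * (b / V))"
    by (intro mult_left_mono ennreal_Youngs_inequality \<theta>) simp
  finally show ?thesis .
qed

lemma nn_integral_Holder:
  assumes [measurable]: "u \<in> borel_measurable M" "v \<in> borel_measurable M"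
    and \<theta>: "0 < \<theta>" "\<theta> < 1"
  shows "(\<integral>\<^sup>+ x. epow (u x) \<theta> * epow (v x) (1 - \<theta>) \<partial>M)
    \<le> epow (\<integral>\<^sup>+ x. u x \<partial>M) \<theta> * epow (\<integral>\<^sup>+ x. v x \<partial>M) (1 - \<theta>)"
proof -
  define U where "U = (\<integral>\<^sup>+ x. u x \<partial>M)"
  define V where "V = (\<integral>\<^sup>+ x. v x \<partial>M)"
  consider "U = 0 \<or> V = 0" | "U \<noteq> 0" "V \<noteq> 0" "U = top \<or> V = top"
    | "U \<noteq> 0" "U \<noteq> top" "V \<noteq> 0" "V \<noteq> top"
    by blast
  then show ?thesis
  proof cases
    case 1
    then have "AE x in M. u x = 0 \<or> v x = 0"
      by (auto simp: U_def V_def nn_integral_0_iff_AE elim: eventually_mono)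
    then have "(\<integral>\<^sup>+ x. epow (u x) \<theta> * epow (v x) (1 - \<theta>) \<partial>M) = (\<integral>\<^sup>+ x. 0 \<partial>M)"
      by (intro nn_integral_cong_AE) (auto elim!: eventually_mono simp: \<theta>)
    then show ?thesis
      by simp
  next
    case 2
    then have "epow U \<theta> * epow V (1 - \<theta>) = top"
      using \<theta> by (auto simp: epow_eq_0_iff ennreal_mult_top ennreal_top_mult)
    then show ?thesis
      by (simp add: U_def V_def)
  next
    case 3
    have "(\<integral>\<^sup>+ x. epow (u x) \<theta> * epow (v x) (1 - \<theta>) \<partial>M)
        \<le> (\<integral>\<^sup>+ x. epow U \<theta> * epow V (1 - \<theta>)
             * (ennreal \<theta> * (u x / U) + ennreal (1 - \<theta>) * (v x / V)) \<partial>M)"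
      by (intro nn_integral_mono ennreal_Youngs_inequality_scaled \<theta> 3)
    also have "\<dots> = epow U \<theta> * epow V (1 - \<theta>) * (ennreal \<theta> * (U / U) + ennreal (1 - \<theta>) * (V / V))"
      by (simp add: nn_integral_cmult nn_integral_add nn_integral_divide U_def V_def)
    also have "\<dots> = epow U \<theta> * epow V (1 - \<theta>)"
      using 3 \<theta> by (simp add: top.not_eq_extremum flip: ennreal_plus)
    finally show ?thesis
      unfolding U_def V_def .
  qed
qed

lemma borel_measurable_mono_ennreal:
  fixes f :: "real \<Rightarrow> ennreal"
  assumes "mono f"
  shows "f \<in> borel_measurable borel"
proof (rule borel_measurableI_greater)
  fix y
  have "is_interval {x. y < f x}"
    unfolding is_interval_1 using assms by (auto dest: monoD intro: less_le_trans)
  then show "{x \<in> space borel. y < f x} \<in> sets borel"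
    by (simp add: real_interval_borel_measurable)
qed

lemma locfin_measure_sigma_finite:
  fixes \<mu> :: "'a::euclidean_space measure"
  assumes "locfin_measure \<mu>"
  shows "sigma_finite_measure \<mu>"
proof
  have sets: "sets \<mu> = sets borel"
    using assms by (simp add: locfin_measure_def)
  let ?A = "range (\<lambda>n::nat. cball (0::'a) (real n))"
  have "\<Union> ?A = UNIV"
    by (auto simp: mem_cball_0 intro: real_arch_simple)
  moreover have "emeasure \<mu> a \<noteq> \<infinity>" if "a \<in> ?A" for a
  proof -
    have "compact a"
      using that by auto
    then show ?thesis
      using assms by (simp add: locfin_measure_def less_top)
  qed
  moreover have "?A \<subseteq> sets \<mu>"
    unfolding sets by (auto intro: borel_closed)
  ultimately show "\<exists>A. countable A \<and> A \<subseteq> sets \<mu> \<and> \<Union> A = space \<mu> \<and> (\<forall>a\<in>A. emeasure \<mu> a \<noteq> \<infinity>)"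
    using sets_eq_imp_space_eq[OF sets] by (intro exI[of _ ?A]) simp
qed

lemma locfin_measure_restricted:
  fixes \<nu> :: "'a::euclidean_space measure"
  assumes "locfin_measure \<nu>" "B \<in> sets borel"
  shows "locfin_measure (density \<nu> (indicator B))"
  unfolding locfin_measure_def
proof (intro conjI allI impI)
  have sets: "sets \<nu> = sets borel"
    using assms by (simp add: locfin_measure_def)
  then show "sets (density \<nu> (indicator B)) = sets borel"
    by simp
  fix K :: "'a set"
  assume "compact K"
  then have "emeasure (density \<nu> (indicator B)) K = emeasure \<nu> (B \<inter> K)"
    using assms sets by (simp add: emeasure_restricted borel_compact)
  also have "\<dots> \<le> emeasure \<nu> K"
    using sets \<open>compact K\<close> by (intro emeasure_mono) (simp_all add: borel_compact)
  also have "\<dots> < \<infinity>"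
    using assms \<open>compact K\<close> by (simp add: locfin_measure_def)
  finally show "emeasure (density \<nu> (indicator B)) K < \<infinity>" .
qed

lemma borel_measurable_emeasure_ball:
  fixes \<mu> :: "'a::euclidean_space measure"
  assumes "locfin_measure \<mu>"
  shows "(\<lambda>yt. emeasure \<mu> (ball (fst yt) (snd yt))) \<in> borel_measurable (borel \<Otimes>\<^sub>M lborel)"
proof -
  interpret sigma_finite_measure \<mu>
    using assms by (rule locfin_measure_sigma_finite)
  have sets: "sets \<mu> = sets borel"
    using assms by (simp add: locfin_measure_def)
  define Q :: "(('a \<times> real) \<times> 'a) set" where "Q = {((y, t), z). dist y z < t}"
  have "open Q"
  proof -
    have "Q = {w. dist (fst (fst w)) (snd w) < snd (fst w)}"
      by (auto simp: Q_def)
    then show ?thesis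
      by (simp add: open_Collect_less continuous_intros)
  qed
  moreover have "sets ((borel \<Otimes>\<^sub>M lborel) \<Otimes>\<^sub>M \<mu>) = sets (borel :: (('a \<times> real) \<times> 'a) measure)"
    using sets by (simp add: borel_prod[symmetric] cong: sets_pair_measure_cong)
  ultimately have "(\<lambda>yt. emeasure \<mu> (Pair yt -` Q)) \<in> borel_measurable (borel \<Otimes>\<^sub>M lborel)"
    by (intro measurable_emeasure_Pair) simp
  moreover have "Pair yt -` Q = ball (fst yt) (snd yt)" for yt
    by (auto simp: Q_def ball_def)
  ultimately show ?thesis
    by (simp add: case_prod_beta')
qed

lemma borel_measurable_emeasure_ball_radius:
  fixes \<mu> :: "'a::euclidean_space measure"
  assumes "locfin_measure \<mu>" "c \<ge> 0"
  shows "(\<lambda>t. emeasure \<mu> (ball x (c * t))) \<in> borel_measurable borel"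
proof (intro borel_measurable_mono_ennreal monoI emeasure_mono)
  fix t t' :: real
  assume "t \<le> t'"
  then show "ball x (c * t) \<subseteq> ball x (c * t')"
    using assms by (intro subset_ball mult_left_mono)
qed (use assms in \<open>simp add: locfin_measure_def\<close>)

(* W and K both have the form  int_0^oo m(t)^g t^(-s g) dt/t  with s = n - alpha p, g = 1/(p-1)
   and m a function of the radius t. *)
definition radial_wolff :: "real \<Rightarrow> real \<Rightarrow> (real \<Rightarrow> ennreal) \<Rightarrow> ennreal" where
  "radial_wolff s g m = (\<integral>\<^sup>+ t\<in>{0<..}. epow (m t) g * ennreal (t powr (- (s * g) - 1)) \<partial>lborel)"

lemma radial_wolff_mono:
  assumes "g > 0" "\<And>t. t > 0 \<Longrightarrow> m t \<le> m' t"
  shows "radial_wolff s g m \<le> radial_wolff s g m'"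
  unfolding radial_wolff_def
  by (intro nn_integral_mono) (auto simp: indicator_def intro!: mult_right_mono epow_mono assms)

lemma radial_wolff_subadditive:
  assumes [measurable]: "m1 \<in> borel_measurable borel" "m2 \<in> borel_measurable borel"
    and "\<And>t. t > 0 \<Longrightarrow> epow (m t) g \<le> c * (epow (m1 t) g + epow (m2 t) g)"
  shows "radial_wolff s g m \<le> c * (radial_wolff s g m1 + radial_wolff s g m2)"
proof -
  let ?w = "\<lambda>t. ennreal (t powr (- (s * g) - 1)) * indicator {0<..} t"
  have "epow (m t) g * ?w t \<le> c * (epow (m1 t) g * ?w t) + c * (epow (m2 t) g * ?w t)" for t
  proof (cases "t > 0")
    case True
    then have "epow (m t) g * ?w t \<le> c * (epow (m1 t) g + epow (m2 t) g) * ?w t"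
      by (intro mult_right_mono assms) simp_all
    then show ?thesis
      by (simp add: algebra_simps)
  qed simp
  then have "radial_wolff s g m \<le> (\<integral>\<^sup>+ t. c * (epow (m1 t) g * ?w t) + c * (epow (m2 t) g * ?w t) \<partial>lborel)"
    unfolding radial_wolff_def mult.assoc by (intro nn_integral_mono)
  also have "\<dots> = c * (radial_wolff s g m1 + radial_wolff s g m2)"
    by (simp add: radial_wolff_def nn_integral_add nn_integral_cmult distrib_left mult.assoc)
  finally show ?thesis .
qed

lemma radial_wolff_cmult:
  assumes "g > 0" and [measurable]: "m \<in> borel_measurable borel"
  shows "radial_wolff s g (\<lambda>t. c * m t) = epow c g * radial_wolff s g m"
  unfolding radial_wolff_def using assms by (simp add: epow_mult mult.assoc nn_integral_cmult)

lemma radial_wolff_dilation: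
  assumes "c > 0" and [measurable]: "m \<in> borel_measurable borel"
  shows "radial_wolff s g (\<lambda>t. m (c * t)) = ennreal (c powr (s * g)) * radial_wolff s g m"
proof -
  let ?w = "\<lambda>t. ennreal (t powr (- (s * g) - 1)) * indicator {0<..} t"
  have "radial_wolff s g m = ennreal c * (\<integral>\<^sup>+ t. epow (m (c * t)) g * ?w (c * t) \<partial>lborel)"
    unfolding radial_wolff_def mult.assoc
    using nn_integral_real_affine[of "\<lambda>t. epow (m t) g * ?w t" c 0] assms by simp
  also have "\<dots> = ennreal c * (\<integral>\<^sup>+ t. ennreal (c powr (- (s * g) - 1)) * (epow (m (c * t)) g * ?w t) \<partial>lborel)"
  proof -
    have "?w (c * t) = ennreal (c powr (- (s * g) - 1)) * ?w t" for t
      using assms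
      by (cases "t > 0") (simp_all add: powr_mult ennreal_mult' zero_less_mult_iff indicator_def)
    then show ?thesis
      by (simp add: mult_ac)
  qed
  also have "\<dots> = ennreal (c * c powr (- (s * g) - 1)) * radial_wolff s g (\<lambda>t. m (c * t))"
    using assms by (simp add: radial_wolff_def nn_integral_cmult ennreal_mult' mult.assoc)
  also have "c * c powr (- (s * g) - 1) = c powr (- (s * g))"
    using assms by (simp add: powr_diff)
  finally have "ennreal (c powr (s * g)) * radial_wolff s g m
      = ennreal (c powr (s * g) * c powr (- (s * g))) * radial_wolff s g (\<lambda>t. m (c * t))"
    by (simp add: ennreal_mult' mult.assoc)
  also have "c powr (s * g) * c powr (- (s * g)) = 1"
    using assms by (simp flip: powr_add)
  finally show ?thesis
    by simp
qed

lemma radial_wolff_Holder: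
  assumes "g > 0" "0 < \<theta>" "\<theta> < 1"
    and [measurable]: "m1 \<in> borel_measurable borel" "m2 \<in> borel_measurable borel"
  shows "radial_wolff s g (\<lambda>t. epow (m1 t) \<theta> * epow (m2 t) (1 - \<theta>))
    \<le> epow (radial_wolff s g m1) \<theta> * epow (radial_wolff s g m2) (1 - \<theta>)"
proof -
  let ?w = "\<lambda>t. ennreal (t powr (- (s * g) - 1)) * indicator {0<..} t"
  have weight_split: "epow (?w t) \<theta> * epow (?w t) (1 - \<theta>) = ?w t" for t
    using assms by (simp add: indicator_def epow_ennreal powr_powr
      flip: ennreal_mult' powr_add distrib_left)
  have "epow (epow (m1 t) \<theta> * epow (m2 t) (1 - \<theta>)) g * ?w t
      = epow (epow (m1 t) g * ?w t) \<theta> * epow (epow (m2 t) g * ?w t) (1 - \<theta>)" for t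
    using assms weight_split[of t] by (simp add: epow_mult epow_epow mult.commute mult.left_commute)
  then have "radial_wolff s g (\<lambda>t. epow (m1 t) \<theta> * epow (m2 t) (1 - \<theta>))
      = (\<integral>\<^sup>+ t. epow (epow (m1 t) g * ?w t) \<theta> * epow (epow (m2 t) g * ?w t) (1 - \<theta>) \<partial>lborel)"
    by (simp add: radial_wolff_def mult.assoc)
  also have "\<dots> \<le> epow (radial_wolff s g m1) \<theta> * epow (radial_wolff s g m2) (1 - \<theta>)"
    unfolding radial_wolff_def mult.assoc using assms by (intro nn_integral_Holder) measurable
  finally show ?thesis .
qed

lemma epow_divide_powr_times_inverse:
  assumes "t > 0" "g > 0"
  shows "epow (m / ennreal (t powr s)) g * ennreal (1 / t) = epow m g * ennreal (t powr (- (s * g) - 1))"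
proof -
  have "(t powr s) powr (- g) * (1 / t) = t powr (- (s * g) - 1)"
    using assms by (simp add: powr_powr powr_diff powr_minus_divide divide_simps)
  then show ?thesis
    using assms by (simp add: epow_divide_ennreal mult.assoc flip: ennreal_mult')
qed

lemma wolff_eq_radial_wolff:
  fixes \<mu> :: "'a::euclidean_space measure"
  assumes "p > 1"
  shows "wolff \<alpha> p \<mu> x
    = radial_wolff (real DIM('a) - \<alpha> * p) (1 / (p - 1)) (\<lambda>t. emeasure \<mu> (ball x t))"
  unfolding wolff_def radial_wolff_def using assms
  by (intro nn_integral_cong) (auto simp: epow_divide_powr_times_inverse indicator_def)

lemma intrinsic_pot_eq_radial_wolff:
  fixes \<sigma> :: "'a::euclidean_space measure"
  assumes "p > 1"
  shows "intrinsic_pot \<alpha> p q \<sigma> x = radial_wolff (real DIM('a) - \<alpha> * p) (1 / (p - 1))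
    (\<lambda>t. epow (kappa \<alpha> p q \<sigma> (ball x t)) (q * (p - 1) / (p - 1 - q)))"
  unfolding intrinsic_pot_def radial_wolff_def using assms
  by (intro nn_integral_cong) (auto simp: epow_divide_powr_times_inverse indicator_def)

lemma borel_measurable_wolff:
  fixes \<mu> :: "'a::euclidean_space measure"
  assumes "locfin_measure \<mu>" "p > 1"
  shows "wolff \<alpha> p \<mu> \<in> borel_measurable borel"
proof -
  note [measurable] = borel_measurable_emeasure_ball[OF assms(1)]
  have "(\<lambda>y. radial_wolff (real DIM('a) - \<alpha> * p) (1 / (p - 1)) (\<lambda>t. emeasure \<mu> (ball y t)))
      \<in> borel_measurable borel"
    unfolding radial_wolff_def
    by (rule lborel.borel_measurable_nn_integral) (simp add: case_prod_beta', measurable)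
  moreover have "wolff \<alpha> p \<mu> = (\<lambda>y. radial_wolff (real DIM('a) - \<alpha> * p) (1 / (p - 1))
      (\<lambda>t. emeasure \<mu> (ball y t)))"
    using assms by (simp add: fun_eq_iff wolff_eq_radial_wolff)
  ultimately show ?thesis
    by simp
qed

lemma wolff_doubled_balls:
  fixes \<nu> :: "'a::euclidean_space measure"
  assumes "locfin_measure \<nu>" "p > 1"
  shows "radial_wolff (real DIM('a) - \<alpha> * p) (1 / (p - 1)) (\<lambda>t. emeasure \<nu> (ball x (2 * t)))
    = ennreal (2 powr ((real DIM('a) - \<alpha> * p) / (p - 1))) * wolff \<alpha> p \<nu> x"
  using radial_wolff_dilation[of 2 "\<lambda>t. emeasure \<nu> (ball x t)"] assms
    borel_measurable_emeasure_ball_radius[OF assms(1), of 1 x]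
  by (simp add: wolff_eq_radial_wolff)

lemma kappa_mono:
  assumes "q > 0" "E \<subseteq> E'"
  shows "kappa \<alpha> p q \<sigma> E \<le> kappa \<alpha> p q \<sigma> E'"
proof -
  have "Lq_on q \<sigma> E f \<le> Lq_on q \<sigma> E' f" for f
    unfolding Lq_on_def using assms
    by (intro epow_mono nn_integral_mono) (auto simp: indicator_def)
  then show ?thesis
    unfolding kappa_def by (intro Inf_superset_mono) (auto intro: order_trans)
qed

lemma borel_measurable_kappa_ball:
  assumes "q > 0"
  shows "(\<lambda>t. kappa \<alpha> p q \<sigma> (ball x t)) \<in> borel_measurable borel"
  using assms by (intro borel_measurable_mono_ennreal monoI kappa_mono subset_ball)

lemma Lq_on_wolff_le_kappa:
  fixes \<mu> :: "'a::euclidean_space measure"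
  assumes "q > 0" "p > 1" "locfin_measure \<mu>" "emeasure \<mu> UNIV < \<infinity>"
  shows "Lq_on q \<sigma> E (wolff \<alpha> p \<mu>) \<le> kappa \<alpha> p q \<sigma> E * epow (emeasure \<mu> UNIV) (1 / (p - 1))"
proof (cases "emeasure \<mu> UNIV = 0")
  case True
  have "emeasure \<mu> (ball y t) \<le> emeasure \<mu> UNIV" for y t
    using assms(3) by (intro emeasure_mono) (simp_all add: locfin_measure_def)
  with True have "wolff \<alpha> p \<mu> y = 0" for y
    using assms by (simp add: wolff_eq_radial_wolff radial_wolff_def)
  then show ?thesis
    using assms by (simp add: Lq_on_def)
next
  case False
  define X where "X = epow (emeasure \<mu> UNIV) (1 / (p - 1))"
  define L where "L = Lq_on q \<sigma> E (wolff \<alpha> p \<mu>)"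
  have X: "X \<noteq> 0" "X \<noteq> \<infinity>"
    using False assms by (auto simp: X_def epow_eq_0_iff epow_def enn2real_eq_0_iff)
  have "L / X \<le> kappa \<alpha> p q \<sigma> E"
    unfolding kappa_def
  proof (rule Inf_greatest, clarify)
    fix C
    assume "\<forall>\<nu>::'a measure. locfin_measure \<nu> \<longrightarrow>
      Lq_on q \<sigma> E (wolff \<alpha> p \<nu>) \<le> C * epow (emeasure \<nu> UNIV) (1 / (p - 1))"
    then have "L \<le> X * C"
      using assms(3) by (auto simp: L_def X_def mult.commute)
    then show "L / X \<le> C"
      using X by (intro divide_le_posI_ennreal) (auto simp: zero_less_iff_neq_zero)
  qed
  then have "L / X * X \<le> kappa \<alpha> p q \<sigma> E * X"
    by (rule mult_right_mono) simp
  moreover have "L / X * X = L"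
    using X by (simp add: ennreal_divide_times top.not_eq_extremum)
  ultimately show ?thesis
    by (simp add: L_def X_def)
qed

lemma nn_integral_wolff_restricted_le_kappa:
  fixes \<nu> \<sigma> :: "'a::euclidean_space measure"
  assumes \<nu>: "locfin_measure \<nu>" and p: "p > 1" and q: "q > 0" and B: "bounded B" "B \<in> sets borel"
  shows "(\<integral>\<^sup>+ y\<in>E. epow (wolff \<alpha> p (density \<nu> (indicator B)) y) q \<partial>\<sigma>)
    \<le> epow (kappa \<alpha> p q \<sigma> E) q * epow (emeasure \<nu> B) (q / (p - 1))"
proof -
  define \<mu> where "\<mu> = density \<nu> (indicator B)"
  have \<mu>: "locfin_measure \<mu>"
    unfolding \<mu>_def using \<nu> B(2) by (rule locfin_measure_restricted)
  have \<mu>_UNIV: "emeasure \<mu> UNIV = emeasure \<nu> B"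
    using \<nu> B by (simp add: \<mu>_def emeasure_restricted locfin_measure_def)
  also have "\<dots> \<le> emeasure \<nu> (closure B)"
    using \<nu> by (intro emeasure_mono closure_subset) (simp add: locfin_measure_def)
  also have "\<dots> < \<infinity>"
    using \<nu> B by (simp add: locfin_measure_def compact_closure)
  finally have "epow (\<integral>\<^sup>+ y\<in>E. epow (wolff \<alpha> p \<mu> y) q \<partial>\<sigma>) (1 / q)
      \<le> kappa \<alpha> p q \<sigma> E * epow (emeasure \<nu> B) (1 / (p - 1))"
    using Lq_on_wolff_le_kappa[OF q p \<mu>] by (simp add: Lq_on_def \<mu>_UNIV)
  from epow_mono[OF q this] show ?thesis
    using p q by (simp add: epow_epow epow_mult \<mu>_def)
qed

lemma wolff_le_restricted_plus_doubled:
  fixes \<nu> :: "'a::euclidean_space measure"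
  assumes \<nu>: "locfin_measure \<nu>" and p: "p > 1" and y: "y \<in> ball x t"
  shows "wolff \<alpha> p \<nu> y \<le> wolff \<alpha> p (density \<nu> (indicator (ball x (2 * t)))) y
    + ennreal (2 powr ((real DIM('a) - \<alpha> * p) / (p - 1))) * wolff \<alpha> p \<nu> x"
proof -
  define \<mu> where "\<mu> = density \<nu> (indicator (ball x (2 * t)))"
  define g where "g = 1 / (p - 1)"
  have sets: "sets \<nu> = sets borel"
    using \<nu> by (simp add: locfin_measure_def)
  have \<mu>: "locfin_measure \<mu>"
    unfolding \<mu>_def by (intro locfin_measure_restricted \<nu>) simp
  have "epow (emeasure \<nu> (ball y r)) g
      \<le> 1 * (epow (emeasure \<mu> (ball y r)) g + epow (emeasure \<nu> (ball x (2 * r))) g)" if "r > 0" for r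
  proof (cases "r < t")
    case True
    with y have "ball y r \<subseteq> ball x (2 * t)"
      by (simp add: ball_subset_ball_iff dist_commute)
    then have "emeasure \<mu> (ball y r) = emeasure \<nu> (ball y r)"
      using sets by (simp add: \<mu>_def emeasure_restricted Int_absorb1)
    then show ?thesis
      by (simp add: add_increasing2)
  next
    case False
    with y have "ball y r \<subseteq> ball x (2 * r)"
      by (simp add: ball_subset_ball_iff dist_commute)
    then have "epow (emeasure \<nu> (ball y r)) g \<le> epow (emeasure \<nu> (ball x (2 * r))) g"
      using sets p by (intro epow_mono emeasure_mono) (simp_all add: g_def)
    then show ?thesis
      by (simp add: add_increasing)
  qed
  then have "wolff \<alpha> p \<nu> y \<le> 1 * (wolff \<alpha> p \<mu> y
      + radial_wolff (real DIM('a) - \<alpha> * p) g (\<lambda>r. emeasure \<nu> (ball x (2 * r))))"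
    unfolding g_def wolff_eq_radial_wolff[OF p]
    using borel_measurable_emeasure_ball_radius[OF \<mu>, of 1 y]
      borel_measurable_emeasure_ball_radius[OF \<nu>, of 2 x]
    by (intro radial_wolff_subadditive) simp_all
  then show ?thesis
    using \<nu> p by (simp add: wolff_doubled_balls g_def \<mu>_def)
qed

lemma emeasure_density_wolff_ball_le:
  fixes \<nu> \<sigma> :: "'a::euclidean_space measure"
  assumes \<nu>: "locfin_measure \<nu>" and \<sigma>: "locfin_measure \<sigma>" and p: "p > 1" and q: "q > 0"
  shows "emeasure (density \<sigma> (\<lambda>y. epow (wolff \<alpha> p \<nu> y) q)) (ball x t)
    \<le> ennreal (2 powr q) * (epow (kappa \<alpha> p q \<sigma> (ball x t)) q
          * epow (emeasure \<nu> (ball x (2 * t))) (q / (p - 1))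
        + epow (ennreal (2 powr ((real DIM('a) - \<alpha> * p) / (p - 1))) * wolff \<alpha> p \<nu> x) q
          * emeasure \<sigma> (ball x t))"
proof -
  define \<mu> where "\<mu> = density \<nu> (indicator (ball x (2 * t)))"
  define A where "A = ennreal (2 powr ((real DIM('a) - \<alpha> * p) / (p - 1))) * wolff \<alpha> p \<nu> x"
  have [measurable_cong]: "sets \<sigma> = sets borel"
    using \<sigma> by (simp add: locfin_measure_def)
  have \<mu>: "locfin_measure \<mu>"
    unfolding \<mu>_def by (intro locfin_measure_restricted \<nu>) simp
  note [measurable] = borel_measurable_wolff[OF \<nu> p] borel_measurable_wolff[OF \<mu> p]
  have pointwise: "epow (wolff \<alpha> p \<nu> y) q \<le> ennreal (2 powr q) * (epow (wolff \<alpha> p \<mu> y) q + epow A q)"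
    if "y \<in> ball x t" for y
    using order_trans[OF epow_mono[OF q wolff_le_restricted_plus_doubled[OF \<nu> p that]] epow_add_le[OF q]]
    by (simp add: \<mu>_def A_def)
  have [measurable]: "ball x t \<in> sets borel"
    by simp
  have "emeasure (density \<sigma> (\<lambda>y. epow (wolff \<alpha> p \<nu> y) q)) (ball x t)
      = (\<integral>\<^sup>+ y\<in>ball x t. epow (wolff \<alpha> p \<nu> y) q \<partial>\<sigma>)"
    by (intro emeasure_density) measurable
  also have "\<dots> \<le> (\<integral>\<^sup>+ y\<in>ball x t. ennreal (2 powr q) * (epow (wolff \<alpha> p \<mu> y) q + epow A q) \<partial>\<sigma>)"
    by (intro nn_integral_mono) (simp add: indicator_def pointwise)
  also have "\<dots> = (\<integral>\<^sup>+ y. ennreal (2 powr q) * (epow (wolff \<alpha> p \<mu> y) q * indicator (ball x t) y)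
      + ennreal (2 powr q) * epow A q * indicator (ball x t) y \<partial>\<sigma>)"
    by (intro nn_integral_cong) (simp add: algebra_simps)
  also have "\<dots> = ennreal (2 powr q) * (\<integral>\<^sup>+ y\<in>ball x t. epow (wolff \<alpha> p \<mu> y) q \<partial>\<sigma>)
      + ennreal (2 powr q) * epow A q * emeasure \<sigma> (ball x t)"
    by (subst nn_integral_add, measurable, subst nn_integral_cmult, measurable)
      (simp add: nn_integral_cmult_indicator)
  also have "\<dots> = ennreal (2 powr q) * ((\<integral>\<^sup>+ y\<in>ball x t. epow (wolff \<alpha> p \<mu> y) q \<partial>\<sigma>)
      + epow A q * emeasure \<sigma> (ball x t))"
    by (simp add: distrib_left mult.assoc)
  also have "\<dots> \<le> ennreal (2 powr q) * (epow (kappa \<alpha> p q \<sigma> (ball x t)) q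
          * epow (emeasure \<nu> (ball x (2 * t))) (q / (p - 1)) + epow A q * emeasure \<sigma> (ball x t))"
    using nn_integral_wolff_restricted_le_kappa[OF \<nu> p q, where B = "ball x (2 * t)" and E = "ball x t"]
    by (intro mult_left_mono add_right_mono) (simp_all add: \<mu>_def)
  finally show ?thesis
    unfolding A_def .
qed

lemma radial_wolff_kappa_le_intrinsic_pot:
  fixes \<nu> \<sigma> :: "'a::euclidean_space measure" and \<alpha> p q :: real
  assumes \<nu>: "locfin_measure \<nu>" and p: "p > 1" and q: "0 < q" "q < p - 1"
  shows "radial_wolff (real DIM('a) - \<alpha> * p) (1 / (p - 1))
      (\<lambda>t. epow (kappa \<alpha> p q \<sigma> (ball x t)) q * epow (emeasure \<nu> (ball x (2 * t))) (q / (p - 1)))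
    \<le> epow (ennreal (2 powr ((real DIM('a) - \<alpha> * p) / (p - 1))) * wolff \<alpha> p \<nu> x) (q / (p - 1))
      * epow (intrinsic_pot \<alpha> p q \<sigma> x) ((p - 1 - q) / (p - 1))"
proof -
  define s where "s = real DIM('a) - \<alpha> * p"
  define g where "g = 1 / (p - 1)"
  define \<theta> where "\<theta> = q / (p - 1)"
  define e where "e = q * (p - 1) / (p - 1 - q)"
  define N where "N t = emeasure \<nu> (ball x (2 * t))" for t
  define K where "K t = epow (kappa \<alpha> p q \<sigma> (ball x t)) e" for t
  have g: "g > 0" and \<theta>: "0 < \<theta>" "\<theta> < 1" and \<theta>': "1 - \<theta> = (p - 1 - q) / (p - 1)" and "e > 0"
    using p q by (auto simp: g_def \<theta>_def e_def field_simps)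
  then have e: "e * (1 - \<theta>) = q"
    using p q by (simp add: e_def)
  have [measurable]: "N \<in> borel_measurable borel"
    using borel_measurable_emeasure_ball_radius[OF \<nu>, of 2 x] by (simp add: N_def[abs_def])
  have [measurable]: "K \<in> borel_measurable borel"
    unfolding K_def[abs_def] using borel_measurable_kappa_ball[OF q(1)] by (rule borel_measurable_epow)
  have "radial_wolff s g (\<lambda>t. epow (kappa \<alpha> p q \<sigma> (ball x t)) q * epow (emeasure \<nu> (ball x (2 * t))) \<theta>)
      = radial_wolff s g (\<lambda>t. epow (N t) \<theta> * epow (K t) (1 - \<theta>))"
    using \<theta> \<open>e > 0\<close> e by (simp add: N_def K_def epow_epow mult.commute)
  also have "\<dots> \<le> epow (radial_wolff s g N) \<theta> * epow (radial_wolff s g K) (1 - \<theta>)"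
    by (rule radial_wolff_Holder[OF g \<theta>]) simp_all
  also have "radial_wolff s g N = ennreal (2 powr (s / (p - 1))) * wolff \<alpha> p \<nu> x"
    using \<nu> p by (simp add: N_def[abs_def] s_def g_def wolff_doubled_balls)
  also have "radial_wolff s g K = intrinsic_pot \<alpha> p q \<sigma> x"
    using p by (simp add: K_def[abs_def] e_def s_def g_def intrinsic_pot_eq_radial_wolff)
  finally show ?thesis
    unfolding \<theta>' unfolding s_def g_def \<theta>_def .
qed

lemma wolff_density_wolff_le:
  fixes \<nu> \<sigma> :: "'a::euclidean_space measure" and \<alpha> p q :: real
  assumes \<nu>: "locfin_measure \<nu>" and \<sigma>: "locfin_measure \<sigma>" and p: "p > 1" and q: "0 < q" "q < p - 1"
  shows "wolff \<alpha> p (density \<sigma> (\<lambda>y. epow (wolff \<alpha> p \<nu> y) q)) x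
    \<le> ennreal (2 powr (q / (p - 1)) * 2 powr (1 / (p - 1))
        * 2 powr ((real DIM('a) - \<alpha> * p) / (p - 1) * (q / (p - 1))))
      * epow (wolff \<alpha> p \<nu> x) (q / (p - 1))
      * (wolff \<alpha> p \<sigma> x + epow (intrinsic_pot \<alpha> p q \<sigma> x) ((p - 1 - q) / (p - 1)))"
proof -
  define s where "s = real DIM('a) - \<alpha> * p"
  define g where "g = 1 / (p - 1)"
  define \<theta> where "\<theta> = q / (p - 1)"
  define A where "A = ennreal (2 powr (s / (p - 1))) * wolff \<alpha> p \<nu> x"
  define K where "K = epow (intrinsic_pot \<alpha> p q \<sigma> x) ((p - 1 - q) / (p - 1))"
  have g: "g > 0" and \<theta>: "\<theta> > 0"
    using p q by (simp_all add: g_def \<theta>_def)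
  have \<sigma>_ball [measurable]: "(\<lambda>t. emeasure \<sigma> (ball x t)) \<in> borel_measurable borel"
    using borel_measurable_emeasure_ball_radius[OF \<sigma>, of 1 x] by simp
  note [measurable] = borel_measurable_kappa_ball[OF q(1)] borel_measurable_emeasure_ball_radius[OF \<nu>, of 2 x]
  let ?a = "\<lambda>t. epow (kappa \<alpha> p q \<sigma> (ball x t)) q * epow (emeasure \<nu> (ball x (2 * t))) \<theta>"
  let ?b = "\<lambda>t. epow A q * emeasure \<sigma> (ball x t)"
  have a: "radial_wolff s g ?a \<le> epow A \<theta> * K"
    using radial_wolff_kappa_le_intrinsic_pot[OF \<nu> p q, of \<alpha> \<sigma> x]
    by (simp add: A_def K_def s_def g_def \<theta>_def)
  have b: "radial_wolff s g ?b = epow A \<theta> * wolff \<alpha> p \<sigma> x"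
    using radial_wolff_cmult[OF g \<sigma>_ball, of s "epow A q"] q p
    by (simp add: epow_epow wolff_eq_radial_wolff s_def g_def \<theta>_def)
  have "wolff \<alpha> p (density \<sigma> (\<lambda>y. epow (wolff \<alpha> p \<nu> y) q)) x
      = radial_wolff s g (\<lambda>t. emeasure (density \<sigma> (\<lambda>y. epow (wolff \<alpha> p \<nu> y) q)) (ball x t))"
    using p by (simp add: wolff_eq_radial_wolff s_def g_def)
  also have "\<dots> \<le> radial_wolff s g (\<lambda>t. ennreal (2 powr q) * (?a t + ?b t))"
    using emeasure_density_wolff_ball_le[OF \<nu> \<sigma> p q(1)] g
    by (intro radial_wolff_mono) (simp_all add: A_def s_def \<theta>_def)
  also have "\<dots> = ennreal (2 powr \<theta>) * radial_wolff s g (\<lambda>t. ?a t + ?b t)"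
    using g by (simp add: radial_wolff_cmult epow_ennreal powr_powr \<theta>_def g_def)
  also have "\<dots> \<le> ennreal (2 powr \<theta>) * (ennreal (2 powr g) * (radial_wolff s g ?a + radial_wolff s g ?b))"
    by (intro mult_left_mono radial_wolff_subadditive epow_add_le g) simp_all
  also have "\<dots> \<le> ennreal (2 powr \<theta>) * (ennreal (2 powr g) * (epow A \<theta> * K + epow A \<theta> * wolff \<alpha> p \<sigma> x))"
    using a b by (intro mult_left_mono add_right_mono) simp_all
  also have "\<dots> = ennreal (2 powr \<theta> * 2 powr g * 2 powr (s / (p - 1) * \<theta>))
      * epow (wolff \<alpha> p \<nu> x) \<theta> * (wolff \<alpha> p \<sigma> x + K)"
    using \<theta> by (simp add: A_def epow_mult epow_ennreal powr_powr ennreal_mult' algebra_simps)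
  finally show ?thesis
    unfolding s_def g_def \<theta>_def K_def .
qed

theorem lemma3p3:
  fixes p q \<alpha> :: real
  assumes "1 < p" and "0 < \<alpha>" and "\<alpha> < real DIM('a::euclidean_space) / p"
    and "0 < q" and "q < p - 1"
  shows "\<exists>C>0. \<forall>(\<nu>::'a measure) \<sigma>. locfin_measure \<nu> \<longrightarrow> locfin_measure \<sigma> \<longrightarrow>
    (\<forall>x. wolff \<alpha> p (density \<sigma> (\<lambda>y. epow (wolff \<alpha> p \<nu> y) q)) x
       \<le> ennreal C * epow (wolff \<alpha> p \<nu> x) (q / (p - 1))
           * (wolff \<alpha> p \<sigma> x + epow (intrinsic_pot \<alpha> p q \<sigma> x) ((p - 1 - q) / (p - 1))))"
  by (intro exI[of _ "2 powr (q / (p - 1)) * 2 powr (1 / (p - 1))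
      * 2 powr ((real DIM('a) - \<alpha> * p) / (p - 1) * (q / (p - 1)))"]
      conjI allI impI wolff_density_wolff_le assms) simp_all

end
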